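(* Let $P_1,\ldots,P_n$ be pairwise distinct linear orders on a finite set of alternatives $A$, and let $k_1,\ldots,k_n$ be positive integers. Let $Q=(P_1^{k_1},\ldots,P_n^{k_n})$ be the profile in which the linear order $P_i$ appears $k_i$ times (each copy held by a distinct voter). Then the profile $P=(P_1,\ldots,P_n)$ is single-crossing with respect to some tree on its voter set if and only if $Q$ is single-crossing with respect to some tree on its voter set.
   Context: A profile is a finite tuple of linear orders on $A$, one for each voter; voter $i$ prefers $a$ to $b$, written $a\succ_i b$. Given a tree $T=(V,E)$ whose vertex set $V$ is the set of voters, the profile is single-crossing with respect to $T$ if for every pair of distinct alternatives $a,b$ one of the following holds: (i) there is an edge $e\in E$ (an "$ab$-cut") such that, removing $e$ from $T$, the two resulting subtrees have vertex sets $V_1,V_2$ with all voters in $V_1$ preferring $a$ to $b$ and all voters in $V_2$ preferring $b$ to $a$; or (ii) all voters prefer $a$ to $b$, or all voters prefer $b$ to $a$. *)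

theory Defs
  imports Main
begin

definition prefers :: "'a rel \<Rightarrow> 'a \<Rightarrow> 'a \<Rightarrow> bool" where
  "prefers r a b \<longleftrightarrow> (a, b) \<in> r \<and> a \<noteq> b"

definition reach :: "'v set set \<Rightarrow> 'v \<Rightarrow> 'v \<Rightarrow> bool" where
  "reach E u w \<longleftrightarrow> (u, w) \<in> {(x, y). {x, y} \<in> E}\<^sup>*"

text \<open>A tree on vertex set V: a simple graph that is connected and acyclic
  (acyclic = every edge is a bridge, i.e. removing it disconnects its endpoints).\<close>
definition is_tree :: "'v set \<Rightarrow> 'v set set \<Rightarrow> bool" where
  "is_tree V E \<longleftrightarrow>
     (\<forall>e\<in>E. \<exists>u w. e = {u, w} \<and> u \<noteq> w \<and> u \<in> V \<and> w \<in> V) \<and>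
     (\<forall>u\<in>V. \<forall>w\<in>V. reach E u w) \<and>
     (\<forall>u w. {u, w} \<in> E \<and> u \<noteq> w \<longrightarrow> \<not> reach (E - {{u, w}}) u w)"

definition ab_cut :: "'v set \<Rightarrow> ('v \<Rightarrow> 'a rel) \<Rightarrow> 'v set set \<Rightarrow> 'a \<Rightarrow> 'a \<Rightarrow> bool" where
  "ab_cut V prof E a b \<longleftrightarrow>
     (\<exists>u w. {u, w} \<in> E \<and> u \<noteq> w \<and>
        (\<forall>x\<in>V. reach (E - {{u, w}}) u x \<longrightarrow> prefers (prof x) a b) \<and>
        (\<forall>x\<in>V. reach (E - {{u, w}}) w x \<longrightarrow> prefers (prof x) b a))"

definition single_crossing_tree ::
  "'a set \<Rightarrow> 'v set \<Rightarrow> ('v \<Rightarrow> 'a rel) \<Rightarrow> 'v set set \<Rightarrow> bool" where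
  "single_crossing_tree A V prof E \<longleftrightarrow>
     (\<forall>a\<in>A. \<forall>b\<in>A. a \<noteq> b \<longrightarrow>
        ab_cut V prof E a b \<or>
        (\<forall>x\<in>V. prefers (prof x) a b) \<or> (\<forall>x\<in>V. prefers (prof x) b a))"

end

theory Submission
  imports Defs
begin

text \<open>Given a single-crossing tree for P, copy it onto one voter holding each order P i and hang
  the remaining copies of P i as leaves from that voter: the old cuts remain cuts, and the new edges
  join voters with equal orders. Conversely, in a single-crossing tree for Q the voters holding a
  common order form a connected subtree, because an edge leaving such a class is the only cut for
  some pair of alternatives ranked differently by its endpoints, while the class lies on both of
  its sides. Contracting each class to a single vertex therefore yields a tree on the voters of P,
  and it is single-crossing since every cut joins different classes.\<close>

lemma reach_refl [simp]: "reach E u u"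
  by (simp add: reach_def)

lemma reach_step: "reach E u v \<Longrightarrow> {v, w} \<in> E \<Longrightarrow> reach E u w"
  unfolding reach_def by (rule rtrancl_into_rtrancl) auto

lemma reach_edge: "{u, w} \<in> E \<Longrightarrow> reach E u w"
  using reach_step[of E u u w] by simp

lemma reach_induct [consumes 1, case_names base step]:
  assumes "reach E u w" "P u" "\<And>x y. P x \<Longrightarrow> {x, y} \<in> E \<Longrightarrow> P y"
  shows "P w"
  using assms(1) unfolding reach_def
  by (induction rule: rtrancl_induct) (use assms(2,3) in auto)

lemma reach_trans: "reach E u v \<Longrightarrow> reach E v w \<Longrightarrow> reach E u w"
  unfolding reach_def by (rule rtrancl_trans)

lemma reach_sym: "reach E u w \<Longrightarrow> reach E w u"
proof (induction rule: reach_induct)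
  case (step x y)
  then show ?case
    using reach_trans reach_edge by (metis insert_commute)
qed simp

lemma reach_mono:
  assumes "E \<subseteq> E'" "reach E u w"
  shows "reach E' u w"
  using assms(2) by (induction rule: reach_induct) (use assms(1) in \<open>auto intro: reach_step\<close>)

lemma reach_map:
  assumes "reach E u w" "\<And>x y. {x, y} \<in> E \<Longrightarrow> h x = h y \<or> {h x, h y} \<in> E'"
  shows "reach E' (h u) (h w)"
  using assms(1)
proof (induction rule: reach_induct)
  case (step x y)
  then show ?case using assms(2)[of x y] by (auto intro: reach_step)
qed simp

lemma reach_isolated: "reach E x y \<Longrightarrow> (\<And>z. {x, z} \<notin> E) \<Longrightarrow> y = x"
  by (induction rule: reach_induct) auto

lemma reach_avoiding_stays_outside:
  "reach {e \<in> E. e \<inter> C = {}} y z \<Longrightarrow> y \<notin> C \<Longrightarrow> z \<notin> C"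
  by (induction rule: reach_induct) auto

lemma reach_enters_set:
  assumes "reach E y z" "y \<notin> C" "z \<in> C"
  obtains d c where "d \<notin> C" "c \<in> C" "{d, c} \<in> E" "reach {e \<in> E. e \<inter> C = {}} y d"
proof -
  let ?F = "{e \<in> E. e \<inter> C = {}}"
  have "reach ?F y z \<or> (\<exists>d c. d \<notin> C \<and> c \<in> C \<and> {d, c} \<in> E \<and> reach ?F y d)"
    using assms(1)
  proof (induction rule: reach_induct)
    case (step x x')
    show ?case
    proof (cases "reach ?F y x")
      case True
      then have "x \<notin> C" by (rule reach_avoiding_stays_outside[OF _ assms(2)])
      show ?thesis
      proof (cases "x' \<in> C")
        case True
        with \<open>x \<notin> C\<close> \<open>reach ?F y x\<close> step(2) show ?thesis
          by (intro disjI2 exI[of _ x] exI[of _ x']) simp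
      next
        case False
        with \<open>x \<notin> C\<close> step(2) have "{x, x'} \<in> ?F" by simp
        with \<open>reach ?F y x\<close> have "reach ?F y x'" by (rule reach_step)
        then show ?thesis ..
      qed
    next
      case False
      with step.IH show ?thesis by simp
    qed
  qed simp
  moreover have "\<not> reach ?F y z"
    using reach_avoiding_stays_outside[OF _ assms(2)] assms(3) by blast
  ultimately show thesis using that by blast
qed

lemma reach_split_at_edge:
  "reach E u x \<Longrightarrow> reach (E - {{u, w}}) u x \<or> reach (E - {{u, w}}) w x"
proof (induction rule: reach_induct)
  case (step x y)
  show ?case
  proof (cases "{x, y} = {u, w}")
    case True
    then have "y = u \<or> y = w" by (auto simp: doubleton_eq_iff)
    then show ?thesis by auto
  next
    case False
    with step(2) have edge: "{x, y} \<in> E - {{u, w}}" by simp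
    from step(1) show ?thesis
      using reach_step[OF _ edge, of u] reach_step[OF _ edge, of w] by blast
  qed
qed simp

lemma tree_edge_subset:
  assumes "is_tree V E" "e \<in> E"
  shows "e \<subseteq> V"
proof -
  have "\<forall>e\<in>E. \<exists>u w. e = {u, w} \<and> u \<noteq> w \<and> u \<in> V \<and> w \<in> V"
    using assms(1) unfolding is_tree_def by (rule conjunct1)
  from bspec[OF this assms(2)] show ?thesis by blast
qed

lemma tree_edge_in: "is_tree V E \<Longrightarrow> {x, y} \<in> E \<Longrightarrow> x \<in> V \<and> y \<in> V"
  using tree_edge_subset by (metis insert_subset)

lemma tree_edge_distinct:
  assumes "is_tree V E" "{x, y} \<in> E"
  shows "x \<noteq> y"
proof -
  have "\<forall>e\<in>E. \<exists>u w. e = {u, w} \<and> u \<noteq> w \<and> u \<in> V \<and> w \<in> V"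
    using assms(1) unfolding is_tree_def by (rule conjunct1)
  from bspec[OF this assms(2)] obtain u w where "{x, y} = {u, w}" "u \<noteq> w"
    by blast
  then show ?thesis by (auto simp: doubleton_eq_iff)
qed

lemma tree_connected: "is_tree V E \<Longrightarrow> u \<in> V \<Longrightarrow> w \<in> V \<Longrightarrow> reach E u w"
  by (simp add: is_tree_def)

lemma tree_bridge:
  assumes "is_tree V E" "{u, w} \<in> E"
  shows "\<not> reach (E - {{u, w}}) u w"
proof -
  have "\<forall>u w. {u, w} \<in> E \<and> u \<noteq> w \<longrightarrow> \<not> reach (E - {{u, w}}) u w"
    using assms(1) unfolding is_tree_def by (rule conjunct2[THEN conjunct2])
  with assms(2) tree_edge_distinct[OF assms] show ?thesis by blast
qed

definition same_prefs :: "'a set \<Rightarrow> 'a rel \<Rightarrow> 'a rel \<Rightarrow> bool" where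
  "same_prefs A r r' \<longleftrightarrow> (\<forall>a\<in>A. \<forall>b\<in>A. prefers r a b \<longleftrightarrow> prefers r' a b)"

lemma same_prefs_refl [simp]: "same_prefs A r r"
  by (simp add: same_prefs_def)

lemma same_prefs_sym: "same_prefs A r r' \<Longrightarrow> same_prefs A r' r"
  by (simp add: same_prefs_def)

lemma same_prefs_trans: "same_prefs A r r' \<Longrightarrow> same_prefs A r' r'' \<Longrightarrow> same_prefs A r r''"
  by (simp add: same_prefs_def)

lemma same_prefsD: "same_prefs A r r' \<Longrightarrow> a \<in> A \<Longrightarrow> b \<in> A \<Longrightarrow> prefers r a b \<longleftrightarrow> prefers r' a b"
  by (simp add: same_prefs_def)

lemma linear_order_eq_if_same_prefs:
  assumes "linear_order_on A r" "linear_order_on A r'" "same_prefs A r r'"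
  shows "r = r'"
proof -
  have "r = Id_on A \<union> {(a, b). a \<in> A \<and> b \<in> A \<and> prefers r a b}" if "linear_order_on A r" for r
    using that unfolding linear_order_on_def partial_order_on_def preorder_on_def refl_on_def prefers_def
    by auto
  with assms show ?thesis unfolding same_prefs_def by blast
qed

definition complete_profile :: "'a set \<Rightarrow> ('v \<Rightarrow> 'a rel) \<Rightarrow> 'v set \<Rightarrow> bool" where
  "complete_profile A p V \<longleftrightarrow>
     (\<forall>x\<in>V. \<forall>a\<in>A. \<forall>b\<in>A. a \<noteq> b \<longrightarrow> (prefers (p x) a b \<longleftrightarrow> \<not> prefers (p x) b a))"

lemma complete_profile_linear_orders:
  assumes "\<forall>x\<in>V. linear_order_on A (p x)"
  shows "complete_profile A p V"
  using assms
  unfolding complete_profile_def linear_order_on_def partial_order_on_def total_on_def antisym_def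
    prefers_def
  by blast

lemma complete_profile_compose:
  "complete_profile A p V \<Longrightarrow> g ` W \<subseteq> V \<Longrightarrow> complete_profile A (\<lambda>x. p (g x)) W"
  unfolding complete_profile_def by blast

lemma complete_profile_iff:
  "complete_profile A p V \<Longrightarrow> x \<in> V \<Longrightarrow> a \<in> A \<Longrightarrow> b \<in> A \<Longrightarrow> a \<noteq> b \<Longrightarrow>
    prefers (p x) a b \<longleftrightarrow> \<not> prefers (p x) b a"
  unfolding complete_profile_def by blast

lemma complete_profile_differ:
  assumes "complete_profile A p V" "x \<in> V" "y \<in> V" "\<not> same_prefs A (p x) (p y)"
  obtains a b where "a \<in> A" "b \<in> A" "a \<noteq> b" "prefers (p x) a b" "prefers (p y) b a"
proof -
  obtain a b where ab: "a \<in> A" "b \<in> A" "prefers (p x) a b \<noteq> prefers (p y) a b"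
    using assms(4) unfolding same_prefs_def by blast
  then have "a \<noteq> b" unfolding prefers_def by auto
  with ab complete_profile_iff[OF assms(1) assms(2)] complete_profile_iff[OF assms(1) assms(3)]
    that[of a b] that[of b a]
  show thesis by metis
qed

definition cut_edge ::
  "'v set \<Rightarrow> ('v \<Rightarrow> 'a rel) \<Rightarrow> 'v set set \<Rightarrow> 'a \<Rightarrow> 'a \<Rightarrow> 'v \<Rightarrow> 'v \<Rightarrow> bool" where
  "cut_edge V p E a b u w \<longleftrightarrow> {u, w} \<in> E \<and> u \<noteq> w \<and>
     (\<forall>x\<in>V. reach (E - {{u, w}}) u x \<longrightarrow> prefers (p x) a b) \<and>
     (\<forall>x\<in>V. reach (E - {{u, w}}) w x \<longrightarrow> prefers (p x) b a)"

lemma ab_cut_iff: "ab_cut V p E a b \<longleftrightarrow> (\<exists>u w. cut_edge V p E a b u w)"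
  unfolding ab_cut_def cut_edge_def ..

lemma single_crossing_treeE:
  assumes "single_crossing_tree A V p E" "a \<in> A" "b \<in> A" "a \<noteq> b"
  obtains (cut) u w where "cut_edge V p E a b u w"
    | (ab) "\<forall>x\<in>V. prefers (p x) a b"
    | (ba) "\<forall>x\<in>V. prefers (p x) b a"
  using assms unfolding single_crossing_tree_def ab_cut_iff by blast

context
  fixes A V p E a b u w
  assumes tree: "is_tree V E" and complete: "complete_profile A p V"
    and ab: "a \<in> A" "b \<in> A" "a \<noteq> b"
    and cut: "cut_edge V p E a b u w"
begin

lemma cut_edge_side_iff:
  assumes "x \<in> V"
  shows "prefers (p x) a b \<longleftrightarrow> reach (E - {{u, w}}) u x"
proof -
  have "u \<in> V" using tree_edge_in[OF tree] cut unfolding cut_edge_def by blast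
  with tree have "reach E u x" using assms by (rule tree_connected)
  then have "reach (E - {{u, w}}) u x \<or> reach (E - {{u, w}}) w x"
    by (rule reach_split_at_edge)
  with cut assms complete_profile_iff[OF complete assms ab] show ?thesis
    unfolding cut_edge_def by blast
qed

lemma cut_edge_other_edge:
  assumes "{x, z} \<in> E" "{x, z} \<noteq> {u, w}"
  shows "prefers (p x) a b \<longleftrightarrow> prefers (p z) a b"
proof -
  have "{x, z} \<in> E - {{u, w}}" "{z, x} \<in> E - {{u, w}}"
    using assms by (auto simp: insert_commute)
  then have "reach (E - {{u, w}}) u x \<longleftrightarrow> reach (E - {{u, w}}) u z"
    using reach_step by metis
  with cut_edge_side_iff tree_edge_in[OF tree assms(1)] show ?thesis by simp
qed

end

lemma cut_edgeI:
  assumes complete: "complete_profile A p V" and ab: "a \<in> A" "b \<in> A" "a \<noteq> b"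
    and edge: "{u, w} \<in> E" "u \<noteq> w" "u \<in> V" "w \<in> V"
    and prefs: "prefers (p u) a b" "prefers (p w) b a"
    and other: "\<And>x z. {x, z} \<in> E - {{u, w}} \<Longrightarrow> prefers (p x) a b \<longleftrightarrow> prefers (p z) a b"
  shows "cut_edge V p E a b u w"
  unfolding cut_edge_def
proof (intro conjI ballI impI edge(1,2))
  have agree: "prefers (p x) a b \<longleftrightarrow> prefers (p y) a b" if "reach (E - {{u, w}}) y x" for x y
    using that by (induction rule: reach_induct) (use other in auto)
  fix x assume x: "x \<in> V"
  show "prefers (p x) a b" if "reach (E - {{u, w}}) u x"
    using agree[OF that] prefs(1) by simp
  show "prefers (p x) b a" if "reach (E - {{u, w}}) w x"
    using agree[OF that] prefs(2) complete_profile_iff[OF complete _ ab] x edge(4) by blast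
qed

lemma single_crossing_tree_edge_cut:
  assumes tree: "is_tree V E" and sc: "single_crossing_tree A V p E"
    and complete: "complete_profile A p V"
    and edge: "{c, d} \<in> E" and differ: "\<not> same_prefs A (p c) (p d)"
  obtains a b where "a \<in> A" "b \<in> A" "a \<noteq> b" "prefers (p c) a b" "cut_edge V p E a b c d"
proof -
  have V: "c \<in> V" "d \<in> V" using tree_edge_in[OF tree edge] by auto
  obtain a b where ab: "a \<in> A" "b \<in> A" "a \<noteq> b"
    and prefs: "prefers (p c) a b" "prefers (p d) b a"
    using complete_profile_differ[OF complete V differ] by blast
  have not_d: "\<not> prefers (p d) a b"
    using prefs(2) complete_profile_iff[OF complete V(2) ab] by blast
  obtain u w where cut: "cut_edge V p E a b u w"
  proof (cases rule: single_crossing_treeE[OF sc ab, case_names cut ab ba])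
    case ab
    with V(2) not_d show thesis by blast
  next
    case ba
    with V(1) prefs(1) complete_profile_iff[OF complete V(1) ab] show thesis by blast
  qed
  have "{c, d} = {u, w}"
    using cut_edge_other_edge[OF tree complete ab cut edge] prefs(1) not_d by blast
  moreover have "u \<noteq> d"
    using cut_edge_side_iff[OF tree complete ab cut V(2)] not_d by auto
  ultimately have "u = c" "w = d" by (auto simp: doubleton_eq_iff)
  with ab prefs(1) cut that show thesis by blast
qed

lemma same_prefs_connected:
  assumes tree: "is_tree V E" and sc: "single_crossing_tree A V p E"
    and complete: "complete_profile A p V"
    and x: "x \<in> V" and y: "y \<in> V" and same: "same_prefs A (p x) (p y)"
  shows "reach {e \<in> E. \<forall>s\<in>e. \<forall>t\<in>e. same_prefs A (p s) (p t)} x y"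
proof (rule ccontr)
  define E' where "E' = {e \<in> E. \<forall>s\<in>e. \<forall>t\<in>e. same_prefs A (p s) (p t)}"
  define C where "C = {z. reach E' x z}"
  \<comment> \<open>The edge by which a path from y first enters C is a cut; y sits on the side of C by its
    preferences, yet reaches the other endpoint without crossing that edge.\<close>
  assume "\<not> reach E' x y"
  then have "y \<notin> C" by (simp add: C_def)
  have "reach E y x" using tree y x by (rule tree_connected)
  moreover note \<open>y \<notin> C\<close>
  moreover have "x \<in> C" by (simp add: C_def)
  ultimately obtain d c where dc: "d \<notin> C" "c \<in> C" "{d, c} \<in> E"
    and path: "reach {e \<in> E. e \<inter> C = {}} y d"
    by (rule reach_enters_set)
  have edge: "{c, d} \<in> E" using dc(3) by (simp add: insert_commute)
  have "reach E' x c" using dc(2) by (simp add: C_def)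
  then have same_xc: "same_prefs A (p x) (p c)"
  proof (induction rule: reach_induct)
    case (step s t)
    then have "same_prefs A (p s) (p t)" by (simp add: E'_def)
    with step(1) show ?case by (rule same_prefs_trans)
  qed simp
  have "\<not> same_prefs A (p c) (p d)"
  proof
    assume "same_prefs A (p c) (p d)"
    with edge have "{c, d} \<in> E'" by (auto simp: E'_def intro: same_prefs_sym)
    with \<open>reach E' x c\<close> have "d \<in> C" by (simp add: C_def reach_step)
    with dc(1) show False by contradiction
  qed
  then obtain a b where ab: "a \<in> A" "b \<in> A" "a \<noteq> b" "prefers (p c) a b"
    and cut: "cut_edge V p E a b c d"
    by (rule single_crossing_tree_edge_cut[OF tree sc complete edge])
  have "same_prefs A (p y) (p c)"
    using same_prefs_trans[OF same_prefs_sym[OF same] same_xc] .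
  then have "reach (E - {{c, d}}) c y"
    using cut_edge_side_iff[OF tree complete ab(1-3) cut y] same_prefsD[OF _ ab(1,2)] ab(4)
    by simp
  moreover have "{e \<in> E. e \<inter> C = {}} \<subseteq> E - {{c, d}}" using dc(2) by auto
  with path have "reach (E - {{c, d}}) y d" by (rule reach_mono[rotated])
  ultimately have "reach (E - {{c, d}}) c d" by (rule reach_trans)
  with tree_bridge[OF tree edge] show False by contradiction
qed

context
  fixes A :: "'a set" and V :: "'v set" and E and p and V' :: "'w set" and E' and p' and h
  assumes tree: "is_tree V E" and complete: "complete_profile A p V"
    and complete': "complete_profile A p' V'"
    and maps: "\<forall>v\<in>V. h v \<in> V'"
    and agree: "\<forall>v\<in>V. same_prefs A (p' (h v)) (p v)"
    and edges_from: "\<And>r t. {r, t} \<in> E' \<Longrightarrow>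
      same_prefs A (p' r) (p' t) \<or> (\<exists>v v'. {v, v'} \<in> E \<and> r = h v \<and> t = h v')"
    and edges_to: "\<And>v v'. {v, v'} \<in> E \<Longrightarrow> h v \<noteq> h v' \<Longrightarrow> {h v, h v'} \<in> E'"
begin

lemma cut_edge_transfer:
  assumes ab: "a \<in> A" "b \<in> A" "a \<noteq> b" and cut: "cut_edge V p E a b u w"
  shows "cut_edge V' p' E' a b (h u) (h w)"
proof -
  have transfer: "prefers (p' (h v)) a b \<longleftrightarrow> prefers (p v) a b"
    "prefers (p' (h v)) b a \<longleftrightarrow> prefers (p v) b a" if "v \<in> V" for v
    using agree that same_prefsD[OF _ ab(1,2)] same_prefsD[OF _ ab(2,1)] by blast+
  have uw: "{u, w} \<in> E" "u \<in> V" "w \<in> V"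
    using cut tree_edge_in[OF tree] unfolding cut_edge_def by auto
  have "prefers (p u) a b" "prefers (p w) b a"
    using cut uw(2,3) unfolding cut_edge_def by simp_all
  then have prefs: "prefers (p' (h u)) a b" "prefers (p' (h w)) b a"
    using transfer uw(2,3) by simp_all
  have distinct: "h u \<noteq> h w"
    using prefs complete_profile_iff[OF complete' _ ab, of "h u"] maps uw(2) by auto
  show ?thesis
  proof (rule cut_edgeI[OF complete' ab edges_to[OF uw(1) distinct] distinct _ _ prefs])
    show "h u \<in> V'" "h w \<in> V'" using maps uw by auto
    fix r t assume rt: "{r, t} \<in> E' - {{h u, h w}}"
    then have "{r, t} \<in> E'" by simp
    from edges_from[OF this] consider "same_prefs A (p' r) (p' t)"
      | v v' where "{v, v'} \<in> E" "r = h v" "t = h v'" by blast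
    then show "prefers (p' r) a b \<longleftrightarrow> prefers (p' t) a b"
    proof cases
      case 1
      from same_prefsD[OF 1 ab(1,2)] show ?thesis .
    next
      case 2
      with rt have "{v, v'} \<noteq> {u, w}" by auto
      with 2 have "prefers (p v) a b \<longleftrightarrow> prefers (p v') a b"
        by (intro cut_edge_other_edge[OF tree complete ab cut])
      moreover have "v \<in> V" "v' \<in> V" using tree_edge_in[OF tree 2(1)] by auto
      ultimately show ?thesis using 2(2,3) transfer by simp
    qed
  qed
qed

lemma single_crossing_tree_transfer:
  assumes sc: "single_crossing_tree A V p E"
    and covered: "\<forall>x\<in>V'. \<exists>v\<in>V. same_prefs A (p' x) (p v)"
  shows "single_crossing_tree A V' p' E'"
  unfolding single_crossing_tree_def ab_cut_iff
proof (intro ballI impI)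
  fix a b assume ab: "a \<in> A" "b \<in> A" "a \<noteq> b"
  have unanimous: "\<forall>x\<in>V'. prefers (p' x) c d" if "\<forall>v\<in>V. prefers (p v) c d" "c \<in> A" "d \<in> A" for c d
  proof
    fix x assume "x \<in> V'"
    with covered obtain v where "v \<in> V" and same: "same_prefs A (p' x) (p v)" by blast
    with that show "prefers (p' x) c d" using same_prefsD[OF same that(2,3)] by blast
  qed
  show "(\<exists>u w. cut_edge V' p' E' a b u w) \<or>
    (\<forall>x\<in>V'. prefers (p' x) a b) \<or> (\<forall>x\<in>V'. prefers (p' x) b a)"
  proof (cases rule: single_crossing_treeE[OF sc ab, case_names cut ab ba])
    case (cut u w)
    then show ?thesis using cut_edge_transfer[OF ab] by blast
  next
    case ab
    then show ?thesis using unanimous \<open>a \<in> A\<close> \<open>b \<in> A\<close> by simp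
  next
    case ba
    then show ?thesis using unanimous \<open>a \<in> A\<close> \<open>b \<in> A\<close> by simp
  qed
qed

end

definition quotient_edges :: "('v \<Rightarrow> 'r) \<Rightarrow> 'v set set \<Rightarrow> 'r set set" where
  "quotient_edges g E = {{g x, g y} | x y. {x, y} \<in> E \<and> g x \<noteq> g y}"

lemma quotient_edgesI: "{x, y} \<in> E \<Longrightarrow> g x \<noteq> g y \<Longrightarrow> {g x, g y} \<in> quotient_edges g E"
  unfolding quotient_edges_def by blast

lemma quotient_edgesE:
  assumes "{r, t} \<in> quotient_edges g E"
  obtains x y where "{x, y} \<in> E" "g x = r" "g y = t" "r \<noteq> t"
proof -
  obtain x y where xy: "{r, t} = {g x, g y}" "{x, y} \<in> E" "g x \<noteq> g y"
    using assms unfolding quotient_edges_def by blast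
  then have "{y, x} \<in> E" by (simp add: insert_commute)
  with xy that[of x y] that[of y x] show thesis by (auto simp: doubleton_eq_iff)
qed

lemma reach_lift_quotient:
  assumes "reach (quotient_edges g F) (g x) t" "x \<in> W"
    and edges_in: "\<And>u v. {u, v} \<in> F \<Longrightarrow> u \<in> W \<and> v \<in> W"
    and fibers: "\<And>u v. u \<in> W \<Longrightarrow> v \<in> W \<Longrightarrow> g u = g v \<Longrightarrow> reach F u v"
    and "y \<in> W" "g y = t"
  shows "reach F x y"
proof -
  from assms(1) have "\<forall>y\<in>W. g y = t \<longrightarrow> reach F x y"
  proof (induction rule: reach_induct)
    case base
    then show ?case using fibers \<open>x \<in> W\<close> by simp
  next
    case (step s0 s1)
    from step(2) obtain z0 z1 where z: "{z0, z1} \<in> F" "g z0 = s0" "g z1 = s1"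
      by (rule quotient_edgesE)
    with edges_in have "z0 \<in> W" "z1 \<in> W" by auto
    with step(1) z have "reach F x z1" by (blast intro: reach_step)
    with \<open>z1 \<in> W\<close> z(3) fibers show ?case by (blast intro: reach_trans)
  qed
  with assms(5,6) show ?thesis by blast
qed

lemma is_tree_quotient:
  assumes tree: "is_tree W E" and onto: "g ` W = R"
    and fibers: "\<And>x y. x \<in> W \<Longrightarrow> y \<in> W \<Longrightarrow> g x = g y \<Longrightarrow>
      reach {e \<in> E. \<forall>s\<in>e. \<forall>t\<in>e. g s = g t} x y"
  shows "is_tree R (quotient_edges g E)"
  unfolding is_tree_def
proof (intro conjI allI impI ballI)
  fix e assume "e \<in> quotient_edges g E"
  then show "\<exists>r t. e = {r, t} \<and> r \<noteq> t \<and> r \<in> R \<and> t \<in> R"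
    unfolding quotient_edges_def using onto tree_edge_in[OF tree] by blast
next
  fix r t assume "r \<in> R" "t \<in> R"
  with onto obtain x y where "x \<in> W" "y \<in> W" "r = g x" "t = g y" by blast
  moreover have "reach E x y" using tree \<open>x \<in> W\<close> \<open>y \<in> W\<close> by (rule tree_connected)
  ultimately show "reach (quotient_edges g E) r t"
    using quotient_edgesI by (metis reach_map)
next
  fix r t assume rt: "{r, t} \<in> quotient_edges g E \<and> r \<noteq> t"
  then obtain x y where xy: "{x, y} \<in> E" "g x = r" "g y = t"
    by (auto elim: quotient_edgesE)
  show "\<not> reach (quotient_edges g E - {{r, t}}) r t"
  proof
    assume "reach (quotient_edges g E - {{r, t}}) r t"
    moreover have "quotient_edges g E - {{r, t}} \<subseteq> quotient_edges g (E - {{x, y}})"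
    proof
      fix e assume e: "e \<in> quotient_edges g E - {{r, t}}"
      then obtain a b where ab: "e = {g a, g b}" "{a, b} \<in> E" "g a \<noteq> g b"
        unfolding quotient_edges_def by blast
      with e xy have "{a, b} \<in> E - {{x, y}}" by auto
      with ab show "e \<in> quotient_edges g (E - {{x, y}})" by (simp add: quotient_edgesI)
    qed
    ultimately have "reach (quotient_edges g (E - {{x, y}})) (g x) t"
      using xy(2) by (blast intro: reach_mono)
    then have "reach (E - {{x, y}}) x y"
    proof (rule reach_lift_quotient)
      show "x \<in> W" "y \<in> W" using tree_edge_in[OF tree xy(1)] by auto
      show "\<And>u v. {u, v} \<in> E - {{x, y}} \<Longrightarrow> u \<in> W \<and> v \<in> W"
        using tree_edge_in[OF tree] by blast
      show "reach (E - {{x, y}}) u v" if "u \<in> W" "v \<in> W" "g u = g v" for u v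
      proof (rule reach_mono[OF _ fibers[OF that]])
        show "{e \<in> E. \<forall>s\<in>e. \<forall>t\<in>e. g s = g t} \<subseteq> E - {{x, y}}"
          using xy rt by auto
      qed
    qed (use xy in simp)
    with tree_bridge[OF tree xy(1)] show False by contradiction
  qed
qed

definition blowup_edges :: "'v set set \<Rightarrow> ('w \<Rightarrow> 'v) \<Rightarrow> ('v \<Rightarrow> 'w) \<Rightarrow> 'w set \<Rightarrow> 'w set set" where
  "blowup_edges E f s W =
     {{s v, s v'} | v v'. {v, v'} \<in> E} \<union> {{x, s (f x)} | x. x \<in> W \<and> x \<noteq> s (f x)}"

context
  fixes V :: "'v set" and E :: "'v set set" and W :: "'w set" and f :: "'w \<Rightarrow> 'v" and s :: "'v \<Rightarrow> 'w"
  assumes tree: "is_tree V E" and f_maps: "\<forall>x\<in>W. f x \<in> V" and s_maps: "\<forall>v\<in>V. s v \<in> W"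
    and f_s: "\<forall>v\<in>V. f (s v) = v"
begin

lemma blowup_edges_cases:
  assumes "{a, b} \<in> blowup_edges E f s W"
  obtains (lifted) v v' where "{v, v'} \<in> E" "a = s v" "b = s v'"
    | (pendant) x where "x \<in> W" "x \<noteq> s (f x)" "{a, b} = {x, s (f x)}"
proof (cases "{a, b} \<in> {{s v, s v'} | v v'. {v, v'} \<in> E}")
  case True
  then obtain v v' where vv: "{a, b} = {s v, s v'}" "{v, v'} \<in> E" by blast
  then have "{v', v} \<in> E" by (simp add: insert_commute)
  with vv lifted[of v v'] lifted[of v' v] show thesis by (auto simp: doubleton_eq_iff)
next
  case False
  with assms pendant show thesis unfolding blowup_edges_def by blast
qed

lemma blowup_edge_at_pendant:
  assumes "x \<in> W" "x \<noteq> s (f x)" "{x, z} \<in> blowup_edges E f s W"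
  shows "z = s (f x)"
  using assms(3)
proof (cases rule: blowup_edges_cases)
  case (lifted v v')
  then have "f x = v" using f_s tree_edge_in[OF tree] by auto
  with lifted assms(2) show ?thesis by simp
next
  case (pendant y)
  with assms f_s f_maps show ?thesis by (auto simp: doubleton_eq_iff)
qed

lemma blowup_edge_image:
  assumes "{a, b} \<in> blowup_edges E f s W"
  shows "f a = f b \<or> ({f a, f b} \<in> E \<and> a = s (f a) \<and> b = s (f b))"
  using assms
proof (cases rule: blowup_edges_cases)
  case (lifted v v')
  then show ?thesis using f_s tree_edge_in[OF tree] by auto
next
  case (pendant x)
  then show ?thesis using f_s f_maps by (auto simp: doubleton_eq_iff)
qed

lemma blowup_edges_bridge:
  assumes edge: "{p, q} \<in> blowup_edges E f s W" and "p \<noteq> q"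
  shows "\<not> reach (blowup_edges E f s W - {{p, q}}) p q"
proof
  let ?F = "blowup_edges E f s W - {{p, q}}"
  assume reach_pq: "reach ?F p q"
  from edge show False
  proof (cases rule: blowup_edges_cases)
    case (lifted v v')
    have V: "v \<in> V" "v' \<in> V" using tree_edge_in[OF tree lifted(1)] by auto
    from reach_pq have "reach (E - {{v, v'}}) (f p) (f q)"
    proof (rule reach_map)
      fix a b assume "{a, b} \<in> ?F"
      with blowup_edge_image[of a b] lifted show "f a = f b \<or> {f a, f b} \<in> E - {{v, v'}}"
        by (auto simp: doubleton_eq_iff)
    qed
    with lifted V f_s tree_bridge[OF tree lifted(1)] show False by simp
  next
    case (pendant x)
    have isolated: "{x, z} \<notin> ?F" for z
      using blowup_edge_at_pendant[OF pendant(1,2)] pendant(3) by auto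
    from pendant(3) have "p = x \<or> q = x" by (auto simp: doubleton_eq_iff)
    then show False
      using reach_isolated[OF reach_pq] reach_isolated[OF reach_sym[OF reach_pq]] isolated \<open>p \<noteq> q\<close>
      by blast
  qed
qed

lemma is_tree_blowup: "is_tree W (blowup_edges E f s W)"
  unfolding is_tree_def
proof (intro conjI allI impI ballI)
  fix e assume "e \<in> blowup_edges E f s W"
  then consider (lifted) v v' where "e = {s v, s v'}" "{v, v'} \<in> E"
    | (pendant) x where "e = {x, s (f x)}" "x \<in> W" "x \<noteq> s (f x)"
    unfolding blowup_edges_def by blast
  then show "\<exists>u w. e = {u, w} \<and> u \<noteq> w \<and> u \<in> W \<and> w \<in> W"
  proof cases
    case lifted
    then have "v \<in> V" "v' \<in> V" "v \<noteq> v'"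
      using tree_edge_in[OF tree] tree_edge_distinct[OF tree] by auto
    then have "s v \<noteq> s v'" using f_s by metis
    with lifted \<open>v \<in> V\<close> \<open>v' \<in> V\<close> s_maps show ?thesis by blast
  next
    case pendant
    with f_maps s_maps show ?thesis by blast
  qed
next
  have to_rep: "reach (blowup_edges E f s W) x (s (f x))" if "x \<in> W" for x
  proof (cases "x = s (f x)")
    case False
    with that have "{x, s (f x)} \<in> blowup_edges E f s W" unfolding blowup_edges_def by blast
    then show ?thesis by (rule reach_edge)
  qed simp
  fix x y assume "x \<in> W" "y \<in> W"
  then have "reach E (f x) (f y)" using tree f_maps by (simp add: tree_connected)
  then have "reach (blowup_edges E f s W) (s (f x)) (s (f y))"
    by (rule reach_map) (auto simp: blowup_edges_def)
  with to_rep[OF \<open>x \<in> W\<close>] have "reach (blowup_edges E f s W) x (s (f y))"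
    by (rule reach_trans)
  with reach_sym[OF to_rep[OF \<open>y \<in> W\<close>]] show "reach (blowup_edges E f s W) x y"
    using reach_trans by metis
next
  fix u w assume "{u, w} \<in> blowup_edges E f s W \<and> u \<noteq> w"
  then show "\<not> reach (blowup_edges E f s W - {{u, w}}) u w"
    using blowup_edges_bridge by blast
qed

end

lemma single_crossing_tree_blowup:
  assumes tree: "is_tree V E" and sc: "single_crossing_tree A V pV E"
    and complete: "complete_profile A pV V" and complete': "complete_profile A pW W"
    and f_maps: "\<forall>x\<in>W. f x \<in> V" and s_maps: "\<forall>v\<in>V. s v \<in> W" and f_s: "\<forall>v\<in>V. f (s v) = v"
    and agree: "\<forall>x\<in>W. same_prefs A (pW x) (pV (f x))"
  shows "\<exists>E'. is_tree W E' \<and> single_crossing_tree A W pW E'"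
proof (intro exI conjI)
  show "is_tree W (blowup_edges E f s W)"
    using tree f_maps s_maps f_s by (rule is_tree_blowup)
  have same_rep: "same_prefs A (pW x) (pW (s (f x)))" if "x \<in> W" for x
    using agree that f_maps s_maps f_s by (metis same_prefs_sym same_prefs_trans)
  show "single_crossing_tree A W pW (blowup_edges E f s W)"
  proof (rule single_crossing_tree_transfer[OF tree complete complete' s_maps _ _ _ sc])
    show "\<forall>v\<in>V. same_prefs A (pW (s v)) (pV v)"
      using agree s_maps f_s by metis
    show "\<forall>x\<in>W. \<exists>v\<in>V. same_prefs A (pW x) (pV v)"
      using agree f_maps by blast
    show "\<And>v v'. {v, v'} \<in> E \<Longrightarrow> s v \<noteq> s v' \<Longrightarrow> {s v, s v'} \<in> blowup_edges E f s W"
      unfolding blowup_edges_def by blast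
    fix r t assume "{r, t} \<in> blowup_edges E f s W"
    then show "same_prefs A (pW r) (pW t) \<or> (\<exists>v v'. {v, v'} \<in> E \<and> r = s v \<and> t = s v')"
    proof (cases rule: blowup_edges_cases[OF tree f_maps s_maps f_s, consumes 1, case_names lifted pendant])
      case (pendant x)
      with same_rep[OF pendant(1)] show ?thesis
        by (auto simp: doubleton_eq_iff intro: same_prefs_sym)
    qed blast
  qed
qed

lemma single_crossing_tree_quotient:
  assumes tree: "is_tree W E" and sc: "single_crossing_tree A W pW E"
    and complete: "complete_profile A pW W" and complete': "complete_profile A pR R"
    and onto: "g ` W = R"
    and agree: "\<forall>x\<in>W. same_prefs A (pW x) (pR (g x))"
    and classes: "\<And>x y. x \<in> W \<Longrightarrow> y \<in> W \<Longrightarrow> same_prefs A (pW x) (pW y) \<Longrightarrow> g x = g y"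
  shows "\<exists>E'. is_tree R E' \<and> single_crossing_tree A R pR E'"
proof (intro exI conjI)
  show "is_tree R (quotient_edges g E)"
  proof (rule is_tree_quotient[OF tree onto])
    fix x y assume xy: "x \<in> W" "y \<in> W" "g x = g y"
    then have "same_prefs A (pW x) (pW y)"
      using agree same_prefs_trans[OF _ same_prefs_sym] by metis
    with tree sc complete xy(1,2)
    have "reach {e \<in> E. \<forall>s\<in>e. \<forall>t\<in>e. same_prefs A (pW s) (pW t)} x y"
      by (rule same_prefs_connected)
    then show "reach {e \<in> E. \<forall>s\<in>e. \<forall>t\<in>e. g s = g t} x y"
      by (rule reach_mono[rotated]) (use classes tree_edge_subset[OF tree] in blast)
  qed
  show "single_crossing_tree A R pR (quotient_edges g E)"
  proof (rule single_crossing_tree_transfer[OF tree complete complete' _ _ _ _ sc])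
    show "\<forall>x\<in>W. g x \<in> R" "\<forall>x\<in>W. same_prefs A (pR (g x)) (pW x)"
      using onto agree same_prefs_sym by auto
    then show "\<forall>r\<in>R. \<exists>x\<in>W. same_prefs A (pR r) (pW x)"
      using onto by blast
    show "\<And>x y. {x, y} \<in> E \<Longrightarrow> g x \<noteq> g y \<Longrightarrow> {g x, g y} \<in> quotient_edges g E"
      by (rule quotient_edgesI)
    show "\<And>r t. {r, t} \<in> quotient_edges g E \<Longrightarrow>
      same_prefs A (pR r) (pR t) \<or> (\<exists>x y. {x, y} \<in> E \<and> r = g x \<and> t = g y)"
      by (metis quotient_edgesE)
  qed
qed

theorem lemma1:
  fixes A :: "'a set" and n :: nat and P :: "nat \<Rightarrow> 'a rel" and k :: "nat \<Rightarrow> nat"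
  assumes "finite A"
    and "\<forall>i<n. linear_order_on A (P i)"
    and "\<forall>i<n. \<forall>j<n. i \<noteq> j \<longrightarrow> P i \<noteq> P j"
    and "\<forall>i<n. k i > 0"
  shows "(\<exists>E. is_tree {..<n} E \<and> single_crossing_tree A {..<n} P E) \<longleftrightarrow>
         (\<exists>E. is_tree {(i, j). i < n \<and> j < k i} E \<and>
              single_crossing_tree A {(i, j). i < n \<and> j < k i} (\<lambda>(i, j). P i) E)"
  (is "?single \<longleftrightarrow> ?copies")
proof -
  let ?Q = "{(i, j). i < n \<and> j < k i}"
  have complete: "complete_profile A P {..<n}"
    using assms(2) by (simp add: complete_profile_linear_orders)
  have complete_copies: "complete_profile A (\<lambda>(i, j). P i) ?Q"
    unfolding case_prod_beta' by (rule complete_profile_compose[OF complete]) auto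
  have agree: "\<forall>x\<in>?Q. same_prefs A ((\<lambda>(i, j). P i) x) (P (fst x))"
    by (simp add: case_prod_beta)
  have same_index: "i = j" if "i < n" "j < n" "same_prefs A (P i) (P j)" for i j
    using linear_order_eq_if_same_prefs[OF assms(2)[rule_format, OF that(1)]
        assms(2)[rule_format, OF that(2)] that(3)] assms(3) that(1,2) by blast
  show ?thesis
  proof
    assume ?single
    then obtain E where "is_tree {..<n} E" "single_crossing_tree A {..<n} P E" by blast
    moreover have "\<forall>x\<in>?Q. fst x \<in> {..<n}" "\<forall>i\<in>{..<n}. (i, 0) \<in> ?Q"
      "\<forall>i\<in>{..<n}. fst (i, 0) = i"
      using assms(4) by auto
    ultimately show ?copies
      by (rule single_crossing_tree_blowup[OF _ _ complete complete_copies _ _ _ agree])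
  next
    assume ?copies
    then obtain E where "is_tree ?Q E" "single_crossing_tree A ?Q (\<lambda>(i, j). P i) E" by blast
    moreover have "fst ` ?Q = {..<n}"
      using assms(4) by (force simp: image_iff)
    moreover note agree
    moreover have "fst x = fst y"
      if "x \<in> ?Q" "y \<in> ?Q" "same_prefs A ((\<lambda>(i, j). P i) x) ((\<lambda>(i, j). P i) y)" for x y
      using that same_index by (auto simp: case_prod_beta)
    ultimately show ?single
      by (rule single_crossing_tree_quotient[OF _ _ complete_copies complete])
  qed
qed

end
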